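(* Let $G$ be a connected simple graph with maximum degree at most $3$ and minimum degree at least $2$, in which no two adjacent vertices both have degree $3$. Let $M_1,M_2$ be disjoint matchings of $G$ such that $|M_1\cup M_2|$ is maximum over all pairs of disjoint matchings, and, subject to this, such that $G_{M_1,M_2}$ has the minimum number of connected components. Then there is no edge of $M_1\cup M_2$ joining a vertex of one component of $G_{M_1,M_2}$ that is a $P_3$ to a vertex of a different component of $G_{M_1,M_2}$ that is a $P_3$.
   Context: $G_{M_1,M_2}$ denotes the subgraph of $G$ induced by the edge set $E(G)\setminus(M_1\cup M_2)$. $P_k$ denotes a path on $k$ vertices. *)

theory Defs
  imports Main
begin

definition simple_graph :: "'a set \<Rightarrow> 'a set set \<Rightarrow> bool" where
  "simple_graph V E \<longleftrightarrow> finite V \<and>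
     (\<forall>e\<in>E. \<exists>u v. e = {u, v} \<and> u \<noteq> v \<and> u \<in> V \<and> v \<in> V)"

definition degree :: "'a set set \<Rightarrow> 'a \<Rightarrow> nat" where
  "degree E v = card {e \<in> E. v \<in> e}"

definition reach :: "'a set set \<Rightarrow> 'a \<Rightarrow> 'a \<Rightarrow> bool" where
  "reach F = (\<lambda>u v. {u, v} \<in> F)\<^sup>*\<^sup>*"

definition connected_graph :: "'a set \<Rightarrow> 'a set set \<Rightarrow> bool" where
  "connected_graph V E \<longleftrightarrow> V \<noteq> {} \<and> (\<forall>u\<in>V. \<forall>v\<in>V. reach E u v)"

definition matching :: "'a set set \<Rightarrow> 'a set set \<Rightarrow> bool" where
  "matching E M \<longleftrightarrow> M \<subseteq> E \<and> (\<forall>e1\<in>M. \<forall>e2\<in>M. e1 \<noteq> e2 \<longrightarrow> e1 \<inter> e2 = {})"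

text \<open>Connected components (as vertex sets) of the subgraph induced by the edge set F,
  whose vertex set is the set of endpoints of edges in F.\<close>
definition components :: "'a set set \<Rightarrow> 'a set set" where
  "components F = {C. \<exists>v\<in>\<Union>F. C = {w. reach F v w}}"

definition num_components :: "'a set set \<Rightarrow> nat" where
  "num_components F = card (components F)"

text \<open>G_{M1,M2}: the subgraph of G induced by E - (M1 \<union> M2), given by its edge set.\<close>
definition G_minus :: "'a set set \<Rightarrow> 'a set set \<Rightarrow> 'a set set \<Rightarrow> 'a set set" where
  "G_minus E M1 M2 = E - (M1 \<union> M2)"

definition is_P3_component :: "'a set set \<Rightarrow> 'a set \<Rightarrow> bool" where
  "is_P3_component F C \<longleftrightarrow> C \<in> components F \<and>
     (\<exists>a b c. a \<noteq> b \<and> b \<noteq> c \<and> a \<noteq> c \<and> C = {a, b, c} \<and>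
        {e \<in> F. e \<subseteq> C} = {{a, b}, {b, c}})"

definition disjoint_matchings :: "'a set set \<Rightarrow> 'a set set \<Rightarrow> 'a set set \<Rightarrow> bool" where
  "disjoint_matchings E M1 M2 \<longleftrightarrow> matching E M1 \<and> matching E M2 \<and> M1 \<inter> M2 = {}"

end

theory Submission
  imports Defs
begin

text \<open>Besides the two degree conditions, only the maximality of \<open>|M1 \<union> M2|\<close> is used.
  Suppose an edge \<open>uv \<in> M1\<close> joins \<open>P3\<close> components \<open>C1 \<ni> u\<close> and \<open>C2 \<ni> v\<close> of
  \<open>G_{M1,M2}\<close>. Then \<open>u\<close> has a neighbour \<open>w\<close> in \<open>C1\<close>, joined to it by an edge of \<open>G_{M1,M2}\<close>,
  that is not covered by \<open>M1\<close>. Indeed, if the middle vertex \<open>b\<close> of a \<open>P3\<close> component is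
  covered by \<open>M1\<close>, it has degree 3, so it is missed by \<open>M2\<close> and its neighbours have degree at
  most 2; an end \<open>x\<close> of the component covered by \<open>M1\<close> is then missed by \<open>M2\<close>, and \<open>xb\<close>
  could be added to \<open>M2\<close>. So \<open>w\<close> is \<open>b\<close> if \<open>u\<close> is an end, and an end if \<open>u = b\<close>. Likewise
  \<open>v\<close> has such a neighbour \<open>w'\<close> in \<open>C2\<close>, and exchanging \<open>M1\<close> along the augmenting path
  \<open>w u v w'\<close> enlarges \<open>M1 \<union> M2\<close>.\<close>

definition covered :: "'a set set \<Rightarrow> 'a \<Rightarrow> bool" where
  "covered M x \<longleftrightarrow> (\<exists>e\<in>M. x \<in> e)"

lemma covered_insert [simp]: "covered (insert e M) x \<longleftrightarrow> x \<in> e \<or> covered M x"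
  unfolding covered_def by blast

lemma simple_graph_finite_edges:
  assumes "simple_graph V E"
  shows "finite E"
proof -
  have "E \<subseteq> Pow V" using assms unfolding simple_graph_def by fastforce
  moreover have "finite V" using assms unfolding simple_graph_def by simp
  ultimately show ?thesis by (meson finite_Pow_iff finite_subset)
qed

lemma simple_graph_endpoint_in_vertices:
  "simple_graph V E \<Longrightarrow> e \<in> E \<Longrightarrow> x \<in> e \<Longrightarrow> x \<in> V"
  unfolding simple_graph_def by fastforce

lemma simple_graph_edge_distinct: "simple_graph V E \<Longrightarrow> {u, v} \<in> E \<Longrightarrow> u \<noteq> v"
  unfolding simple_graph_def by (metis doubleton_eq_iff)

lemma length_le_degree:
  assumes "finite E" "set es \<subseteq> E" "distinct es" "\<forall>e\<in>set es. x \<in> e"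
  shows "length es \<le> degree E x"
proof -
  have "card (set es) \<le> degree E x" unfolding degree_def using assms by (intro card_mono) auto
  then show ?thesis using distinct_card[OF assms(3)] by simp
qed

lemma matching_subset: "matching E M \<Longrightarrow> N \<subseteq> M \<Longrightarrow> matching E N"
  unfolding matching_def by blast

lemma matching_insert:
  assumes "matching E M" "e \<in> E" "\<forall>x\<in>e. \<not> covered M x"
  shows "matching E (insert e M)"
  using assms unfolding matching_def covered_def by blast

lemma matching_not_covered_Diff:
  "matching E M \<Longrightarrow> e \<in> M \<Longrightarrow> x \<in> e \<Longrightarrow> \<not> covered (M - {e}) x"
  unfolding matching_def covered_def by blast

lemma reach_sym:
  assumes "reach F u v"
  shows "reach F v u"
proof -
  have "symp (\<lambda>u v. {u, v} \<in> F)" by (simp add: symp_def insert_commute)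
  then show ?thesis using assms unfolding reach_def by (metis symp_rtranclp sympD)
qed

lemma components_eq_reach_class:
  assumes "C \<in> components F" "w \<in> C"
  shows "C = {z. reach F w z}"
proof -
  obtain v where C: "C = {z. reach F v z}" using assms(1) unfolding components_def by blast
  with assms(2) have "reach F v w" by simp
  then have "reach F v z \<longleftrightarrow> reach F w z" for z
    by (metis reach_def reach_sym rtranclp_trans)
  then show ?thesis using C by blast
qed

lemma components_disjoint:
  "C1 \<in> components F \<Longrightarrow> C2 \<in> components F \<Longrightarrow> C1 \<noteq> C2 \<Longrightarrow> C1 \<inter> C2 = {}"
  by (metis components_eq_reach_class disjoint_iff)

locale max_disjoint_matchings =
  fixes V :: "'a set" and E M1 M2 :: "'a set set"
  assumes graph: "simple_graph V E"
    and disjoint: "disjoint_matchings E M1 M2"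
    and maximum: "\<forall>N1 N2. disjoint_matchings E N1 N2 \<longrightarrow> card (N1 \<union> N2) \<le> card (M1 \<union> M2)"
begin

lemma matching_M1: "matching E M1"
  and matching_M2: "matching E M2"
  and M1_M2_disjoint: "M1 \<inter> M2 = {}"
  using disjoint unfolding disjoint_matchings_def by auto

lemma M1_subset_E: "M1 \<subseteq> E" and M2_subset_E: "M2 \<subseteq> E"
  using matching_M1 matching_M2 unfolding matching_def by auto

lemma finite_E: "finite E"
  using simple_graph_finite_edges[OF graph] .

lemma finite_M1_M2: "finite (M1 \<union> M2)"
  using finite_E M1_subset_E M2_subset_E by (meson finite_Un finite_subset)

lemma degree_ge_3_if_doubly_covered:
  assumes xy: "{x, y} \<in> G_minus E M1 M2" and "covered M1 x" "covered M2 x"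
  shows "3 \<le> degree E x"
proof -
  obtain f g where "f \<in> M1" "x \<in> f" "g \<in> M2" "x \<in> g"
    using assms(2,3) unfolding covered_def by blast
  then have "length [{x, y}, f, g] \<le> degree E x"
    using xy M1_subset_E M2_subset_E M1_M2_disjoint
    by (intro length_le_degree[OF finite_E]) (auto simp: G_minus_def)
  then show ?thesis by simp
qed

lemma degree_ge_3_if_covered_with_two_free_edges:
  assumes xy: "{x, y} \<in> G_minus E M1 M2" and zy: "{z, y} \<in> G_minus E M1 M2" and "x \<noteq> z"
    and "covered M1 y"
  shows "3 \<le> degree E y"
proof -
  obtain f where "f \<in> M1" "y \<in> f" using \<open>covered M1 y\<close> unfolding covered_def by blast
  then have "length [{x, y}, {z, y}, f] \<le> degree E y"
    using xy zy \<open>x \<noteq> z\<close> M1_subset_E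
    by (intro length_le_degree[OF finite_E]) (auto simp: G_minus_def doubleton_eq_iff)
  then show ?thesis by simp
qed

lemma degree_ge_4_if_doubly_covered_with_two_free_edges:
  assumes xy: "{x, y} \<in> G_minus E M1 M2" and zy: "{z, y} \<in> G_minus E M1 M2" and "x \<noteq> z"
    and "covered M1 y" "covered M2 y"
  shows "4 \<le> degree E y"
proof -
  obtain f g where "f \<in> M1" "y \<in> f" "g \<in> M2" "y \<in> g"
    using assms(4,5) unfolding covered_def by blast
  then have "length [{x, y}, {z, y}, f, g] \<le> degree E y"
    using xy zy \<open>x \<noteq> z\<close> M1_subset_E M2_subset_E M1_M2_disjoint
    by (intro length_le_degree[OF finite_E]) (auto simp: G_minus_def doubleton_eq_iff)
  then show ?thesis by simp
qed

lemma no_augmenting_edge: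
  assumes xy: "{x, y} \<in> G_minus E M1 M2" and "\<not> covered M2 x" "\<not> covered M2 y"
  shows False
proof -
  have "matching E (insert {x, y} M2)"
    using matching_insert[OF matching_M2] assms unfolding G_minus_def by auto
  moreover have "{x, y} \<notin> M1 \<union> M2" using xy unfolding G_minus_def by blast
  ultimately have "disjoint_matchings E M1 (insert {x, y} M2)"
    using matching_M1 M1_M2_disjoint unfolding disjoint_matchings_def by auto
  then have "card (insert {x, y} (M1 \<union> M2)) \<le> card (M1 \<union> M2)"
    using maximum by (metis Un_insert_right)
  with \<open>{x, y} \<notin> M1 \<union> M2\<close> show False using finite_M1_M2 by simp
qed

lemma no_augmenting_path_3:
  assumes uv: "{u, v} \<in> M1"
    and uw: "{u, w} \<in> G_minus E M1 M2" and vw': "{v, w'} \<in> G_minus E M1 M2"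
    and w: "\<not> covered M1 w" and w': "\<not> covered M1 w'" and "w \<noteq> w'"
  shows False
proof -
  define M where "M = M1 - {{u, v}}"
  define N where "N = insert {u, w} (insert {v, w'} M)"
  have "{u, w} \<in> E" "{v, w'} \<in> E" "{u, w} \<notin> M1 \<union> M2" "{v, w'} \<notin> M1 \<union> M2"
    using uw vw' unfolding G_minus_def by auto
  have "u \<noteq> v" using simple_graph_edge_distinct[OF graph] uv M1_subset_E by blast
  have "u \<noteq> w'" "v \<noteq> w" using uv w w' unfolding covered_def by auto
  have free: "\<not> covered M x" if "x \<in> {u, v, w, w'}" for x
    using that matching_not_covered_Diff[OF matching_M1 uv] w w'
    unfolding M_def covered_def by auto
  have "matching E M" unfolding M_def by (rule matching_subset[OF matching_M1]) blast
  then have "matching E (insert {v, w'} M)"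
    using free by (intro matching_insert[OF _ \<open>{v, w'} \<in> E\<close>]) auto
  then have "matching E N"
    unfolding N_def using free \<open>u \<noteq> v\<close> \<open>u \<noteq> w'\<close> \<open>v \<noteq> w\<close> \<open>w \<noteq> w'\<close>
    by (intro matching_insert[OF _ \<open>{u, w} \<in> E\<close>]) auto
  moreover have "N \<inter> M2 = {}"
    using M1_M2_disjoint \<open>{u, w} \<notin> M1 \<union> M2\<close> \<open>{v, w'} \<notin> M1 \<union> M2\<close> unfolding N_def M_def by auto
  ultimately have "card (N \<union> M2) \<le> card (M1 \<union> M2)"
    using maximum matching_M2 unfolding disjoint_matchings_def by blast
  moreover have "N \<union> M2 = insert {u, w} (insert {v, w'} (M1 \<union> M2 - {{u, v}}))"
    using uv M1_M2_disjoint unfolding N_def M_def by auto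
  moreover have "{u, w} \<noteq> {v, w'}" using \<open>u \<noteq> v\<close> \<open>u \<noteq> w'\<close> by (auto simp: doubleton_eq_iff)
  moreover have "card (M1 \<union> M2) > 0" using uv finite_M1_M2 card_gt_0_iff by blast
  ultimately show False
    using finite_M1_M2 \<open>{u, w} \<notin> M1 \<union> M2\<close> \<open>{v, w'} \<notin> M1 \<union> M2\<close> uv by simp
qed

end

lemma max_disjoint_matchings_swap:
  assumes "max_disjoint_matchings V E M1 M2"
  shows "max_disjoint_matchings V E M2 M1"
  using assms unfolding max_disjoint_matchings_def disjoint_matchings_def by (auto simp: Un_commute)

locale subcubic_max_disjoint_matchings = max_disjoint_matchings +
  assumes degree_le_3: "\<forall>v\<in>V. degree E v \<le> 3"
    and no_adjacent_degree_3: "\<forall>u v. {u, v} \<in> E \<longrightarrow> \<not> (degree E u = 3 \<and> degree E v = 3)"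
begin

lemma covered_vertex_free_neighbour_uncovered:
  assumes xy: "{x, y} \<in> G_minus E M1 M2" and zy: "{z, y} \<in> G_minus E M1 M2" and "x \<noteq> z"
    and "covered M1 y"
  shows "\<not> covered M1 x"
proof
  assume "covered M1 x"
  have "{x, y} \<in> E" using xy unfolding G_minus_def by blast
  then have "x \<in> V" "y \<in> V" using simple_graph_endpoint_in_vertices[OF graph] by auto
  have deg_y: "degree E y = 3"
    using degree_ge_3_if_covered_with_two_free_edges[OF assms] degree_le_3 \<open>y \<in> V\<close>
    by (simp add: le_antisym)
  then have "\<not> covered M2 y"
    using degree_ge_4_if_doubly_covered_with_two_free_edges[OF assms] by auto
  moreover have "\<not> covered M2 x"
  proof
    assume "covered M2 x"
    then have "degree E x = 3"
      using degree_ge_3_if_doubly_covered[OF xy \<open>covered M1 x\<close>] degree_le_3 \<open>x \<in> V\<close>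
      by (simp add: le_antisym)
    then show False using no_adjacent_degree_3 \<open>{x, y} \<in> E\<close> deg_y by blast
  qed
  ultimately show False using no_augmenting_edge[OF xy] by blast
qed

lemma P3_component_free_neighbour:
  assumes P3: "is_P3_component (G_minus E M1 M2) C" and "u \<in> C" and "covered M1 u"
  shows "\<exists>w\<in>C. {u, w} \<in> G_minus E M1 M2 \<and> \<not> covered M1 w"
proof -
  obtain a b c where abc: "a \<noteq> b" "b \<noteq> c" "a \<noteq> c" "C = {a, b, c}"
    and edges: "{e \<in> G_minus E M1 M2. e \<subseteq> C} = {{a, b}, {b, c}}"
    using P3 unfolding is_P3_component_def by blast
  have "{a, b} \<in> {e \<in> G_minus E M1 M2. e \<subseteq> C}" "{b, c} \<in> {e \<in> G_minus E M1 M2. e \<subseteq> C}"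
    unfolding edges by simp_all
  then have ab: "{a, b} \<in> G_minus E M1 M2" and cb: "{c, b} \<in> G_minus E M1 M2"
    by (simp_all add: insert_commute)
  note a_free = covered_vertex_free_neighbour_uncovered[OF ab cb \<open>a \<noteq> c\<close>]
  note c_free = covered_vertex_free_neighbour_uncovered[OF cb ab \<open>a \<noteq> c\<close>[symmetric]]
  show ?thesis
  proof (cases "u = b")
    case True
    then have "\<not> covered M1 c" using c_free \<open>covered M1 u\<close> by blast
    then show ?thesis using True cb abc by (simp add: insert_commute)
  next
    case False
    then have "u = a \<or> u = c" using \<open>u \<in> C\<close> abc by blast
    then have "{u, b} \<in> G_minus E M1 M2" using ab cb by (auto simp: insert_commute)
    moreover have "\<not> covered M1 b"
      using \<open>u = a \<or> u = c\<close> a_free c_free \<open>covered M1 u\<close> by blast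
    ultimately show ?thesis using abc by blast
  qed
qed

lemma no_M1_edge_between_P3_components:
  assumes uv: "{u, v} \<in> M1"
    and P3: "is_P3_component (G_minus E M1 M2) C1" "is_P3_component (G_minus E M1 M2) C2"
    and "C1 \<noteq> C2" "u \<in> C1" "v \<in> C2"
  shows False
proof -
  have "covered M1 u" "covered M1 v" using uv unfolding covered_def by auto
  obtain w where w: "w \<in> C1" "{u, w} \<in> G_minus E M1 M2" "\<not> covered M1 w"
    using P3_component_free_neighbour[OF P3(1) \<open>u \<in> C1\<close> \<open>covered M1 u\<close>] by blast
  obtain w' where w': "w' \<in> C2" "{v, w'} \<in> G_minus E M1 M2" "\<not> covered M1 w'"
    using P3_component_free_neighbour[OF P3(2) \<open>v \<in> C2\<close> \<open>covered M1 v\<close>] by blast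
  have "C1 \<in> components (G_minus E M1 M2)" "C2 \<in> components (G_minus E M1 M2)"
    using P3 unfolding is_P3_component_def by simp_all
  then have "C1 \<inter> C2 = {}" using components_disjoint \<open>C1 \<noteq> C2\<close> by blast
  then have "w \<noteq> w'" using w w' by blast
  then show False using no_augmenting_path_3[OF uv w(2) w'(2) w(3) w'(3)] by blast
qed

end

lemma subcubic_max_disjoint_matchings_swap:
  assumes "subcubic_max_disjoint_matchings V E M1 M2"
  shows "subcubic_max_disjoint_matchings V E M2 M1"
  using assms max_disjoint_matchings_swap
  unfolding subcubic_max_disjoint_matchings_def subcubic_max_disjoint_matchings_axioms_def by blast

theorem lemma2:
  fixes V :: "'a set" and E M1 M2 :: "'a set set"
  assumes "simple_graph V E"
    and "connected_graph V E"
    and "\<forall>v\<in>V. degree E v \<le> 3"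
    and "\<forall>v\<in>V. degree E v \<ge> 2"
    and "\<forall>u v. {u, v} \<in> E \<longrightarrow> \<not> (degree E u = 3 \<and> degree E v = 3)"
    and "disjoint_matchings E M1 M2"
    and "\<forall>N1 N2. disjoint_matchings E N1 N2 \<longrightarrow> card (N1 \<union> N2) \<le> card (M1 \<union> M2)"
    and "\<forall>N1 N2. disjoint_matchings E N1 N2 \<and> card (N1 \<union> N2) = card (M1 \<union> M2) \<longrightarrow>
           num_components (G_minus E M1 M2) \<le> num_components (G_minus E N1 N2)"
  shows "\<not> (\<exists>u v C1 C2. {u, v} \<in> M1 \<union> M2 \<and>
            is_P3_component (G_minus E M1 M2) C1 \<and> is_P3_component (G_minus E M1 M2) C2 \<and>
            C1 \<noteq> C2 \<and> u \<in> C1 \<and> v \<in> C2)"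
proof (intro notI, elim exE conjE)
  fix u v C1 C2
  assume uv: "{u, v} \<in> M1 \<union> M2"
    and C: "is_P3_component (G_minus E M1 M2) C1" "is_P3_component (G_minus E M1 M2) C2"
      "C1 \<noteq> C2" "u \<in> C1" "v \<in> C2"
  have M1_M2: "subcubic_max_disjoint_matchings V E M1 M2"
    by unfold_locales (fact assms)+
  then have M2_M1: "subcubic_max_disjoint_matchings V E M2 M1"
    by (rule subcubic_max_disjoint_matchings_swap)
  have G_minus_swap: "G_minus E M2 M1 = G_minus E M1 M2" unfolding G_minus_def by blast
  from uv show False
  proof
    assume "{u, v} \<in> M1"
    then show False
      by (rule subcubic_max_disjoint_matchings.no_M1_edge_between_P3_components[OF M1_M2 _ C])
  next
    assume "{u, v} \<in> M2"
    then show False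
      using subcubic_max_disjoint_matchings.no_M1_edge_between_P3_components[OF M2_M1 _ _ _ C(3-5)]
        C(1,2) G_minus_swap by simp
  qed
qed

end
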